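(* For positive integers $n$, $k$ and $r$, \[S_{\leq m}(n,k,r)=(k-1)!\binom{k+r-1}{k-1}{n\brace k+r-1}_{\leq m}.\]
   Context: $S_{\leq m}(n,k,r)$ (mixed restricted Stirling number of the second kind) is the number of ways to distribute the elements of $[n]$ into non-empty cells, where there are $r$ cells carrying the label $1$ (indistinguishable among themselves) and one cell each with labels $2,\dots,k$, such that every cell contains at most $m$ elements. ${n\brace k}_{\leq m}$ is the number of partitions of $[n]$ into $k$ non-empty blocks each of size at most $m$. *)

theory Defs
  imports Main "HOL-Library.Disjoint_Sets" "HOL-Library.FuncSet"
begin

definition stirling_le :: "nat \<Rightarrow> nat \<Rightarrow> nat \<Rightarrow> nat" where
  "stirling_le m n k =
     card {P. partition_on {1..n} P \<and> card P = k \<and> (\<forall>B\<in>P. card B \<le> m)}"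

text \<open>Mixed restricted Stirling number S_{<=m}(n,k,r): distributions of {1..n}
  into non-empty cells, where r cells carry label 1 (indistinguishable, hence
  given as a set U of r blocks) and one cell each carries label 2,...,k
  (given as an injective map g on {2..k}); cells are pairwise distinct and
  disjoint, cover {1..n}, and each has at most m elements.\<close>
definition mixed_stirling_le :: "nat \<Rightarrow> nat \<Rightarrow> nat \<Rightarrow> nat \<Rightarrow> nat" where
  "mixed_stirling_le m n k r =
     card {(U, g). U \<subseteq> Pow {1..n} \<and> card U = r \<and>
                  g \<in> {2..k} \<rightarrow>\<^sub>E Pow {1..n} \<and> inj_on g {2..k} \<and>
                  U \<inter> g ` {2..k} = {} \<and>
                  partition_on {1..n} (U \<union> g ` {2..k}) \<and>
                  (\<forall>B \<in> U \<union> g ` {2..k}. card B \<le> m)}"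

end

theory Submission
  imports Defs
begin

text \<open>Forgetting the labels 2, \<dots>, k turns a labelled distribution into a restricted
  partition with k + r - 1 blocks; conversely, a partition with k + r - 1 blocks
  is labelled by choosing an injection of the k - 1 labels into its blocks, the
  unlabelled blocks forming the r cells with label 1. There are
  (k - 1)! \<cdot> binomial (k + r - 1) (k - 1) such injections.\<close>

lemma prod_diff_eq_fact_mult_choose:
  "j \<le> N \<Longrightarrow> (\<Prod>i\<in>{0..<j}. (N::nat) - i) = fact j * (N choose j)"
proof (induction j)
  case 0
  then show ?case by simp
next
  case (Suc j)
  then have "(\<Prod>i\<in>{0..<Suc j}. N - i) = fact j * ((N choose j) * (N - j))"
    by simp
  also have "(N choose j) * (N - j) = (N choose Suc j) * Suc j"
    by (metis binomial_absorb_comp binomial_absorption mult.commute)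
  finally show ?case by (simp add: algebra_simps)
qed

lemma card_inj_PiE:
  assumes "finite A" "finite C" "card A \<le> card C"
  shows "card {f \<in> A \<rightarrow>\<^sub>E C. inj_on f A} = fact (card A) * (card C choose card A)"
  using card_inj_on_subset_funcset[OF assms(1,2) order_refl]
    prod_diff_eq_fact_mult_choose[OF assms(3)]
  by simp

lemma bij_betw_labelled_family:
  fixes A :: "'a set" and \<P> :: "'b set set"
  assumes "\<P> \<subseteq> Pow S" "finite S" "finite A"
  shows "bij_betw (\<lambda>(U, g). (U \<union> g ` A, g))
    {(U, g). U \<subseteq> S \<and> card U = r \<and> g \<in> A \<rightarrow>\<^sub>E S \<and> inj_on g A \<and>
             U \<inter> g ` A = {} \<and> U \<union> g ` A \<in> \<P>}
    (SIGMA P:{P \<in> \<P>. card P = card A + r}. {g \<in> A \<rightarrow>\<^sub>E P. inj_on g A})"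
proof (rule bij_betw_byWitness[where f' = "\<lambda>(P, g). (P - g ` A, g)"])
  have card_union: "card (U \<union> g ` A) = card U + card A"
    if "finite U" "inj_on g A" "U \<inter> g ` A = {}" for U and g :: "'a \<Rightarrow> 'b"
    using that assms(3) by (simp add: card_Un_disjoint card_image)
  have finite_member: "finite P" if "P \<in> \<P>" for P
    using that assms(1,2) by (meson PowD finite_subset in_mono)
  show "(\<lambda>(U, g). (U \<union> g ` A, g)) ` {(U, g). U \<subseteq> S \<and> card U = r \<and> g \<in> A \<rightarrow>\<^sub>E S \<and>
      inj_on g A \<and> U \<inter> g ` A = {} \<and> U \<union> g ` A \<in> \<P>}
    \<subseteq> (SIGMA P:{P \<in> \<P>. card P = card A + r}. {g \<in> A \<rightarrow>\<^sub>E P. inj_on g A})"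
  proof clarify
    fix U and g :: "'a \<Rightarrow> 'b"
    assume "U \<subseteq> S" "g \<in> A \<rightarrow>\<^sub>E S" "inj_on g A" "U \<inter> g ` A = {}" "U \<union> g ` A \<in> \<P>"
    moreover from this have "finite U"
      using assms(2) finite_subset by blast
    ultimately show "U \<union> g ` A \<in> {P \<in> \<P>. card P = card A + card U} \<and>
        g \<in> {g' \<in> A \<rightarrow>\<^sub>E U \<union> g ` A. inj_on g' A}"
      using card_union by (auto simp: PiE_iff)
  qed
  show "(\<lambda>(P, g). (P - g ` A, g)) ` (SIGMA P:{P \<in> \<P>. card P = card A + r}.
      {g \<in> A \<rightarrow>\<^sub>E P. inj_on g A})
    \<subseteq> {(U, g). U \<subseteq> S \<and> card U = r \<and> g \<in> A \<rightarrow>\<^sub>E S \<and> inj_on g A \<and>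
      U \<inter> g ` A = {} \<and> U \<union> g ` A \<in> \<P>}"
  proof clarify
    fix P and g :: "'a \<Rightarrow> 'b"
    assume P: "P \<in> \<P>" "card P = card A + r" and g: "g \<in> A \<rightarrow>\<^sub>E P" "inj_on g A"
    then have restore: "P - g ` A \<union> g ` A = P"
      by blast
    have "card (P - g ` A \<union> g ` A) = card (P - g ` A) + card A"
      using finite_member[OF P(1)] g(2) by (intro card_union) auto
    with restore P(2) have "card (P - g ` A) = r"
      by simp
    with P g restore assms(1) show "P - g ` A \<subseteq> S \<and> card (P - g ` A) = r \<and> g \<in> A \<rightarrow>\<^sub>E S \<and>
        inj_on g A \<and> (P - g ` A) \<inter> g ` A = {} \<and> P - g ` A \<union> g ` A \<in> \<P>"
      by (auto simp: PiE_iff)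
  qed
qed (auto simp: PiE_def)

lemma card_labelled_family:
  fixes A :: "'a set" and \<P> :: "'b set set"
  assumes "\<P> \<subseteq> Pow S" "finite S" "finite A"
  shows "card {(U, g). U \<subseteq> S \<and> card U = r \<and> g \<in> A \<rightarrow>\<^sub>E S \<and> inj_on g A \<and>
                       U \<inter> g ` A = {} \<and> U \<union> g ` A \<in> \<P>}
       = fact (card A) * ((card A + r) choose card A) * card {P \<in> \<P>. card P = card A + r}"
proof -
  let ?\<P>' = "{P \<in> \<P>. card P = card A + r}"
  have finite_family: "finite \<P>" and finite_member: "\<And>P. P \<in> \<P> \<Longrightarrow> finite P"
    using assms(1,2) by (auto intro: finite_subset)
  have "card {(U, g). U \<subseteq> S \<and> card U = r \<and> g \<in> A \<rightarrow>\<^sub>E S \<and> inj_on g A \<and>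
                      U \<inter> g ` A = {} \<and> U \<union> g ` A \<in> \<P>}
      = card (SIGMA P:?\<P>'. {g \<in> A \<rightarrow>\<^sub>E P. inj_on g A})"
    using bij_betw_same_card[OF bij_betw_labelled_family[OF assms]] .
  also have "\<dots> = (\<Sum>P\<in>?\<P>'. card {g \<in> A \<rightarrow>\<^sub>E P. inj_on g A})"
    using finite_family finite_member assms(3) by (intro card_SigmaI) (auto simp: finite_PiE)
  also have "\<dots> = (\<Sum>P\<in>?\<P>'. fact (card A) * ((card A + r) choose card A))"
  proof (rule sum.cong[OF refl])
    fix P assume "P \<in> ?\<P>'"
    then show "card {g \<in> A \<rightarrow>\<^sub>E P. inj_on g A} = fact (card A) * ((card A + r) choose card A)"
      using card_inj_PiE[OF assms(3) finite_member] by simp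
  qed
  finally show ?thesis by simp
qed

theorem mainTheorem12:
  fixes n k r m :: nat
  assumes "n > 0" and "k > 0" and "r > 0"
  shows "mixed_stirling_le m n k r =
           fact (k - 1) * ((k + r - 1) choose (k - 1)) * stirling_le m n (k + r - 1)"
proof -
  let ?\<P> = "{P. partition_on {1..n} P \<and> (\<forall>B\<in>P. card B \<le> m)}"
  have "?\<P> \<subseteq> Pow (Pow {1..n})"
    by (auto simp: partition_on_def)
  from card_labelled_family[OF this, of "{2..k}" r]
  have "mixed_stirling_le m n k r
      = fact (k - 1) * ((k - 1 + r) choose (k - 1)) * card {P \<in> ?\<P>. card P = k - 1 + r}"
    by (simp add: mixed_stirling_le_def)
  also have "k - 1 + r = k + r - 1"
    using \<open>k > 0\<close> by simp
  finally show ?thesis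
    by (simp add: stirling_le_def conj_ac)
qed

end
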